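(* Let $\varnothing\neq K\subseteq\mathbb R^d$ be compact, let $\delta\ge 0$, and let $\psi:K_\delta\to\mathbb R^d$ satisfy $L_1|x-y|\le|\psi(x)-\psi(y)|\le L_2|x-y|$ for all $x,y\in K_\delta$, where $0<L_1\le L_2<\infty$. Then $$\big(\psi(K)\big)_{L_1\delta}\subseteq\psi(K_\delta)\subseteq\big(\psi(K)\big)_{L_2\delta}.$$
   Context: For $A\subseteq\mathbb R^d$ and $r\ge0$, $A_r=\{x\in\mathbb R^d:\operatorname{dist}(x,A)\le r\}$ is the closed $r$-parallel set of $A$ (so $A_0$ is the closure of $A$). *)

theory Defs
  imports "HOL-Analysis.Analysis"
begin

text \<open>Closed r-parallel set: points at distance at most r from A.
  For A = {} infdist is 0 by convention, but the theorem only uses nonempty sets.\<close>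
definition parallel_set :: "'a::metric_space set \<Rightarrow> real \<Rightarrow> 'a set" where
  "parallel_set A r = {x. infdist x A \<le> r}"

end

theory Submission
  imports Defs
begin

text \<open>The outer inclusion is the Lipschitz bound applied to a nearest point of \<open>K\<close>.
  For the inner one, take \<open>z\<close> within \<open>L\<^sub>1\<delta>\<close> of \<open>\<psi>(K)\<close> and a nearest point \<open>\<psi>(k)\<close>.
  By invariance of domain \<open>\<psi>\<close> maps the open ball \<open>B(k,\<delta>)\<close> onto an open set; the lower
  bound shows that inside \<open>B(\<psi>(k), L\<^sub>1\<delta>)\<close> this open set coincides with the compact
  image of the closed ball, so it is clopen in the connected ball \<open>B(\<psi>(k), L\<^sub>1\<delta>)\<close> and
  hence fills it; taking closures, \<open>z\<close> lies in the image of the closed ball of radius \<open>\<delta>\<close>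
  about \<open>k\<close>.\<close>

lemma subset_parallel_set: "0 \<le> r \<Longrightarrow> A \<subseteq> parallel_set A r"
  by (auto simp: parallel_set_def)

lemma cball_subset_parallel_set: "a \<in> A \<Longrightarrow> cball a r \<subseteq> parallel_set A r"
  by (auto simp: parallel_set_def dist_commute intro: infdist_le2)

lemma mem_parallel_set_closed_iff:
  fixes A :: "'a::heine_borel set"
  assumes "closed A" and "A \<noteq> {}"
  shows "x \<in> parallel_set A r \<longleftrightarrow> (\<exists>a\<in>A. dist x a \<le> r)"
proof
  assume "x \<in> parallel_set A r"
  moreover obtain a where "a \<in> A" "infdist x A = dist x a"
    using infdist_attains_inf[OF assms] by blast
  ultimately show "\<exists>a\<in>A. dist x a \<le> r"
    by (auto simp: parallel_set_def)
qed (auto simp: parallel_set_def intro: infdist_le2)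

lemma image_parallel_set_subset:
  fixes A :: "'a::heine_borel set" and f :: "'a \<Rightarrow> 'b::metric_space"
  assumes "closed A" and "A \<noteq> {}" and lip: "lipschitz_on L (parallel_set A r) f"
  shows "f ` parallel_set A r \<subseteq> parallel_set (f ` A) (L * r)"
proof clarify
  fix x assume x: "x \<in> parallel_set A r"
  then obtain a where a: "a \<in> A" "dist x a \<le> r"
    using mem_parallel_set_closed_iff[OF assms(1,2)] by blast
  have "a \<in> parallel_set A r"
    using a(1) order_trans[OF zero_le_dist a(2)] by (simp add: parallel_set_def)
  then have "dist (f x) (f a) \<le> L * dist x a"
    using lip x by (rule lipschitz_onD[rotated 2])
  also have "\<dots> \<le> L * r"
    using a lipschitz_on_nonneg[OF lip] by (simp add: mult_left_mono)
  finally show "f x \<in> parallel_set (f ` A) (L * r)"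
    using a by (auto simp: parallel_set_def intro: infdist_le2)
qed

lemma cball_subset_image_cball:
  fixes f :: "'a \<Rightarrow> 'a::euclidean_space"
  assumes cont: "continuous_on (cball a r) f" and "0 < L"
    and low: "\<And>x y. x \<in> cball a r \<Longrightarrow> y \<in> cball a r \<Longrightarrow> L * dist x y \<le> dist (f x) (f y)"
  shows "cball (f a) (L * r) \<subseteq> f ` cball a r"
proof (cases "0 < r")
  case False
  then show ?thesis
    using \<open>0 < L\<close> by (cases "r = 0") (auto simp: mult_pos_neg)
next
  case True
  define B where "B = ball (f a) (L * r)"
  define U where "U = f ` ball a r"
  define C where "C = f ` cball a r"
  have "inj_on f (cball a r)"
  proof (rule inj_onI)
    fix x y assume "x \<in> cball a r" "y \<in> cball a r" "f x = f y"
    then have "L * dist x y \<le> 0" using low by fastforce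
    then show "x = y" using \<open>0 < L\<close> by (simp add: mult_le_0_iff)
  qed
  then have "open U"
    unfolding U_def using cont
    by (intro invariance_of_domain) (auto intro: continuous_on_subset inj_on_subset)
  have "closed C"
    unfolding C_def by (intro compact_imp_closed compact_continuous_image cont) simp
  have "B \<inter> C \<subseteq> U"
  proof
    fix w assume "w \<in> B \<inter> C"
    then obtain x where x: "x \<in> cball a r" "w = f x" and "dist (f a) w < L * r"
      unfolding B_def C_def by auto
    have "L * dist a x \<le> dist (f a) (f x)"
      using low x True by simp
    also have "\<dots> < L * r" using \<open>dist (f a) w < L * r\<close> x by simp
    finally show "w \<in> U" using x \<open>0 < L\<close> unfolding U_def by auto
  qed
  then have BU_eq_BC: "B \<inter> U = B \<inter> C"
    unfolding U_def C_def by auto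
  have "connected B"
    unfolding B_def by simp
  moreover have "openin (top_of_set B) (B \<inter> U)"
    using \<open>open U\<close> by (simp add: openin_open_Int)
  moreover have "closedin (top_of_set B) (B \<inter> U)"
    using \<open>closed C\<close> BU_eq_BC by (simp add: closedin_closed_Int)
  ultimately have "B \<inter> U = {} \<or> B \<inter> U = B"
    unfolding connected_clopen by blast
  moreover have "f a \<in> B \<inter> U"
    unfolding B_def U_def using True \<open>0 < L\<close> by auto
  ultimately have "B \<subseteq> C"
    using BU_eq_BC by auto
  then have "closure B \<subseteq> C"
    using \<open>closed C\<close> by (simp add: closure_minimal)
  moreover have "closure B = cball (f a) (L * r)"
    unfolding B_def using True \<open>0 < L\<close> by simp
  ultimately show ?thesis
    unfolding C_def by (simp only:)
qed

lemma parallel_set_image_subset: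
  fixes A :: "'a::euclidean_space set" and f :: "'a \<Rightarrow> 'a"
  assumes "compact A" and "A \<noteq> {}" and "0 \<le> r" and "0 < L"
    and cont: "continuous_on (parallel_set A r) f"
    and low: "\<And>x y. x \<in> parallel_set A r \<Longrightarrow> y \<in> parallel_set A r \<Longrightarrow>
                L * dist x y \<le> dist (f x) (f y)"
  shows "parallel_set (f ` A) (L * r) \<subseteq> f ` parallel_set A r"
proof
  fix z assume z: "z \<in> parallel_set (f ` A) (L * r)"
  have "compact (f ` A)"
    using assms(1) cont subset_parallel_set[OF \<open>0 \<le> r\<close>]
    by (blast intro: compact_continuous_image continuous_on_subset)
  then obtain a where a: "a \<in> A" "dist z (f a) \<le> L * r"
    using z mem_parallel_set_closed_iff[OF compact_imp_closed] \<open>A \<noteq> {}\<close> by blast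
  have ball_sub: "cball a r \<subseteq> parallel_set A r"
    using a(1) by (rule cball_subset_parallel_set)
  have "cball (f a) (L * r) \<subseteq> f ` cball a r"
    using ball_sub by (intro cball_subset_image_cball \<open>0 < L\<close> low continuous_on_subset[OF cont]) auto
  moreover have "z \<in> cball (f a) (L * r)"
    using a(2) by (simp add: dist_commute)
  ultimately show "z \<in> f ` parallel_set A r"
    using ball_sub by blast
qed

theorem mainTheorem2:
  fixes K :: "'a::euclidean_space set" and \<psi> :: "'a \<Rightarrow> 'a"
    and \<delta> L1 L2 :: real
  assumes "K \<noteq> {}" and "compact K" and "\<delta> \<ge> 0"
    and "0 < L1" and "L1 \<le> L2"
    and "\<And>x y. x \<in> parallel_set K \<delta> \<Longrightarrow> y \<in> parallel_set K \<delta> \<Longrightarrow>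
           L1 * dist x y \<le> dist (\<psi> x) (\<psi> y)"
    and "\<And>x y. x \<in> parallel_set K \<delta> \<Longrightarrow> y \<in> parallel_set K \<delta> \<Longrightarrow>
           dist (\<psi> x) (\<psi> y) \<le> L2 * dist x y"
  shows "parallel_set (\<psi> ` K) (L1 * \<delta>) \<subseteq> \<psi> ` parallel_set K \<delta>
       \<and> \<psi> ` parallel_set K \<delta> \<subseteq> parallel_set (\<psi> ` K) (L2 * \<delta>)"
proof
  have lip: "lipschitz_on L2 (parallel_set K \<delta>) \<psi>"
    using assms(4,5,7) by (auto simp: lipschitz_on_def)
  show "parallel_set (\<psi> ` K) (L1 * \<delta>) \<subseteq> \<psi> ` parallel_set K \<delta>"
    using assms(2,1,3,4) lipschitz_on_continuous_on[OF lip] assms(6)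
    by (rule parallel_set_image_subset)
  show "\<psi> ` parallel_set K \<delta> \<subseteq> parallel_set (\<psi> ` K) (L2 * \<delta>)"
    using compact_imp_closed[OF assms(2)] assms(1) lip by (rule image_parallel_set_subset)
qed

end
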